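(* Let $L$, $\rho$, $\mathcal{H}$ and $\mathrm{ht}_\rho$ be as in the context. The open horoball $\{x\in\mathbb{C}H^{13}:\mathrm{ht}_\rho(x)<1\}$ is disjoint from $\mathcal{H}$, and the hyperplanes of $\mathcal{M}$ that meet its boundary $\{x:\mathrm{ht}_\rho(x)=1\}$ are exactly the orthogonal complements $l^\perp$ of the roots $l$ satisfying $|\langle\rho,l\rangle|^2=3$.
   Context: Let $\omega$ be a primitive cube root of unity, $\mathcal{E}=\mathbb{Z}[\omega]$, $\theta=\omega-\bar\omega=\sqrt{-3}$. Hermitian forms are linear in the first argument and antilinear in the second; $v^2=\langle v,v\rangle$. $\Lambda$ is the complex Leech lattice, an $\mathcal{E}$-lattice of rank 12 whose underlying real lattice is a scaled Leech lattice, scaled to have minimal norm $6$ (all inner products in $\theta\mathcal{E}$, $\Lambda=\theta\Lambda^*$). $L=\Lambda\oplus\mathcal{E}^2$, vectors $(x;y,z)$, with $\langle(x;y,z),(x';y',z')\rangle=\langle x,x'\rangle_\Lambda+\bar\theta y\bar z'+\theta z\bar y'$; signature $(13,1)$. $\mathbb{C}H^{13}$ is the set of negative-definite lines in $L\otimes_{\mathcal{E}}\mathbb{C}$. A root is a vector of $L$ of norm $3$; $\mathcal{M}$ is the set of hyperplanes $s^\perp\subseteq\mathbb{C}H^{13}$ for roots $s$, $\mathcal{H}$ their union. $\rho=(0;0,1)$, and for $x\in\mathbb{C}H^{13}$ represented by $w$, $\mathrm{ht}_\rho(x)=-|\langle\rho,w\rangle|^2/w^2$. *)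

theory Defs
  imports "HOL-Analysis.Analysis"
begin

definition omega :: complex where
  "omega = Complex (-1/2) (sqrt 3 / 2)"

definition theta :: complex where
  "theta = omega - cnj omega"             \<comment> \<open>= sqrt(-3)\<close>

definition Eis :: "complex set" where
  "Eis = {of_int a + of_int b * omega | a b. True}"

type_synonym vec12 = "complex ^ 12"

definition herm12 :: "vec12 \<Rightarrow> vec12 \<Rightarrow> complex" where
  "herm12 x y = (\<Sum>i\<in>UNIV. x $ i * cnj (y $ i))"

text \<open>The complex Leech lattice, realised (w.l.o.g., after a complex change of
 basis) inside C^12 with the standard positive definite Hermitian form:
 a free E-module of rank 12 spanning C^12, with all inner products in
 theta*E, minimal norm 6, and Lambda = theta * Lambda^*.\<close>

definition dual_lattice :: "vec12 set \<Rightarrow> vec12 set" where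
  "dual_lattice Lam = {y. \<forall>x\<in>Lam. herm12 x y \<in> Eis}"

definition complex_leech :: "vec12 set \<Rightarrow> bool" where
  "complex_leech Lam \<longleftrightarrow>
     (\<exists>b :: 12 \<Rightarrow> vec12.
        (\<forall>c :: 12 \<Rightarrow> complex. (\<Sum>i\<in>UNIV. c i *s b i) = 0 \<longrightarrow> (\<forall>i. c i = 0)) \<and>
        Lam = {(\<Sum>i\<in>UNIV. a i *s b i) | a. \<forall>i. a i \<in> Eis}) \<and>
     (\<forall>x\<in>Lam. \<forall>y\<in>Lam. herm12 x y \<in> {theta * e | e. e \<in> Eis}) \<and>
     (\<forall>x\<in>Lam. x \<noteq> 0 \<longrightarrow> Re (herm12 x x) \<ge> 6) \<and>
     (\<exists>x\<in>Lam. herm12 x x = 6) \<and>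
     Lam = {theta *s y | y. y \<in> dual_lattice Lam}"

type_synonym vecL = "vec12 \<times> complex \<times> complex"

definition formL :: "vecL \<Rightarrow> vecL \<Rightarrow> complex" where
  "formL v w = (case v of (x, y, z) \<Rightarrow> case w of (x', y', z') \<Rightarrow>
      herm12 x x' + cnj theta * y * cnj z' + theta * z * cnj y')"

definition smulL :: "complex \<Rightarrow> vecL \<Rightarrow> vecL" where
  "smulL c v = (case v of (x, y, z) \<Rightarrow> (c *s x, c * y, c * z))"

definition latL :: "vec12 set \<Rightarrow> vecL set" where
  "latL Lam = {(x, y, z) | x y z. x \<in> Lam \<and> y \<in> Eis \<and> z \<in> Eis}"

definition cline :: "vecL \<Rightarrow> vecL set" where
  "cline w = {smulL c w | c. True}"

definition CH13 :: "vecL set set" where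
  "CH13 = {cline w | w. Re (formL w w) < 0}"

definition rho :: vecL where
  "rho = (0, 0, 1)"

definition ht :: "vecL set \<Rightarrow> real" where
  "ht p = (let w = (SOME w. w \<in> p \<and> w \<noteq> (0,0,0))
           in - ((cmod (formL rho w)) ^ 2 / Re (formL w w)))"

definition is_root :: "vec12 set \<Rightarrow> vecL \<Rightarrow> bool" where
  "is_root Lam s \<longleftrightarrow> s \<in> latL Lam \<and> formL s s = 3"

definition perp :: "vecL \<Rightarrow> vecL set set" where
  "perp s = {p \<in> CH13. \<forall>w\<in>p. formL w s = 0}"

definition mirrors :: "vec12 set \<Rightarrow> vecL set set set" where
  "mirrors Lam = {perp s | s. is_root Lam s}"

end

theory Submission imports Defs begin

text \<open>Write \<open>s = (a; b, c)\<close> and \<open>w = (x; y, z)\<close>, so that \<open>\<langle>\<rho>, s\<rangle> = \<theta> b\<^sup>*\<close> and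
 \<open>\<langle>\<rho>, w\<rangle> = \<theta> y\<^sup>*\<close>. If \<open>w \<perp> s\<close>, expanding the (positive semidefinite) Leech norm of
 \<open>b x - y a\<close> gives \<open>|\<langle>\<rho>,s\<rangle>|\<^sup>2 w\<^sup>2 + s\<^sup>2 |\<langle>\<rho>,w\<rangle>|\<^sup>2 \<ge> 0\<close>, i.e. every negative point of
 \<open>s\<^sup>\<perp>\<close> has height at least \<open>|\<langle>\<rho>,s\<rangle>|\<^sup>2 / s\<^sup>2\<close>, with equality at the negative vector
 \<open>s - (s\<^sup>2 / \<langle>\<rho>,s\<rangle>) \<rho>\<close>. For a root, \<open>b\<close> is a nonzero Eisenstein integer (the Leech
 lattice has no vectors of norm 3), so \<open>|\<langle>\<rho>,s\<rangle>|\<^sup>2 = 3|b|\<^sup>2 \<ge> 3\<close> and the bound is \<open>\<ge> 1\<close>.\<close>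

lemma theta_eq: "theta = Complex 0 (sqrt 3)"
  unfolding theta_def omega_def by (simp add: complex_eq_iff)

lemma cmod_theta_sq: "(cmod theta)^2 = 3"
  by (simp add: theta_eq cmod_def)

lemma Eis_cmod_sq_ge_1:
  assumes "b \<in> Eis" "b \<noteq> 0"
  shows "(cmod b)^2 \<ge> 1"
proof -
  obtain m n :: int where b: "b = of_int m + of_int n * omega"
    using assms(1) by (auto simp: Eis_def)
  have "(cmod b)^2 = (m - n/2)^2 + (n * sqrt 3 / 2)^2"
    by (simp add: b omega_def cmod_power2)
  also have "\<dots> = of_int (m^2 - m*n + n^2)"
    by (simp add: power2_eq_square algebra_simps)
  finally have norm_eq: "(cmod b)^2 = of_int (m^2 - m*n + n^2)" .
  have "(m, n) \<noteq> (0, 0)" using assms(2) b by auto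
  then have "(2*m - n)^2 + 3*n^2 > 0"
    by (cases "n = 0") (auto simp: add_nonneg_pos)
  moreover have "4 * (m^2 - m*n + n^2) = (2*m - n)^2 + 3*n^2"
    by (simp add: power2_eq_square algebra_simps)
  ultimately have "m^2 - m*n + n^2 \<ge> 1" by simp
  then show ?thesis unfolding norm_eq by (metis of_int_1 of_int_le_iff)
qed

lemma herm12_cnj: "herm12 a x = cnj (herm12 x a)"
  unfolding herm12_def by (simp add: mult.commute)

lemma herm12_self_Re_nonneg: "Re (herm12 x x) \<ge> 0"
  unfolding herm12_def by (simp add: sum_nonneg flip: complex_norm_square)

lemma herm12_diff_diff:
  "herm12 (b *s x - y *s a) (b *s x - y *s a)
     = b * cnj b * herm12 x x - b * cnj y * herm12 x a - y * cnj b * herm12 a x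
       + y * cnj y * herm12 a a"
  unfolding herm12_def
  by (simp add: sum_distrib_left sum_subtractf[symmetric] sum.distrib[symmetric] algebra_simps)

lemma formL_cnj: "formL w v = cnj (formL v w)"
proof (cases v; cases w)
  fix x y z x' y' z' assume "v = (x, y, z)" "w = (x', y', z')"
  then show ?thesis using herm12_cnj[of x' x] by (simp add: formL_def algebra_simps)
qed

lemma formL_self_real: "formL v v = of_real (Re (formL v v))"
  using formL_cnj[of v v] by (simp add: complex_eq_iff)

lemma formL_smulL_left: "formL (smulL c v) w = c * formL v w"
  by (cases v; cases w) (simp add: formL_def smulL_def herm12_def sum_distrib_left algebra_simps)

lemma formL_smulL_right: "formL v (smulL c w) = cnj c * formL v w"
  by (cases v; cases w) (simp add: formL_def smulL_def herm12_def sum_distrib_left algebra_simps)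

lemma formL_add_left: "formL (u + v) w = formL u w + formL v w"
  by (cases u; cases v; cases w) (simp add: formL_def herm12_def sum.distrib algebra_simps)

lemma formL_add_right: "formL u (v + w) = formL u v + formL u w"
  by (cases u; cases v; cases w) (simp add: formL_def herm12_def sum.distrib algebra_simps)

lemma formL_rho: "formL rho (x, y, z) = theta * cnj y"
  by (simp add: formL_def rho_def herm12_def)

lemma formL_rho_rho: "formL rho rho = 0"
  by (simp add: rho_def formL_def herm12_def)

lemma cmod_formL_rho_sq: "(cmod (formL rho (x, y, z)))^2 = 3 * (cmod y)^2"
  by (simp add: formL_rho norm_mult power_mult_distrib cmod_theta_sq)

lemma ht_cline:
  assumes "Re (formL w w) < 0"
  shows "ht (cline w) = - ((cmod (formL rho w))^2 / Re (formL w w))"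
proof -
  have "w \<noteq> (0, 0, 0)" using assms by (auto simp: formL_def herm12_def)
  then have "\<exists>v. v \<in> cline w \<and> v \<noteq> (0, 0, 0)"
    by (intro exI[of _ w]) (auto simp: cline_def smulL_def intro!: exI[of _ 1] split: prod.splits)
  then obtain v where v: "v = (SOME v. v \<in> cline w \<and> v \<noteq> (0, 0, 0))"
    "v \<in> cline w" "v \<noteq> (0, 0, 0)"
    by (metis (mono_tags, lifting) someI_ex)
  then obtain c where c: "v = smulL c w" by (auto simp: cline_def)
  then have "(cmod c)^2 > 0" using v(3) by (auto simp: smulL_def split: prod.splits)
  moreover have "(cmod (formL rho v))^2 = (cmod c)^2 * (cmod (formL rho w))^2"
    by (simp add: c formL_smulL_right norm_mult power_mult_distrib)
  moreover have "formL v v = c * cnj c * formL w w"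
    by (simp add: c formL_smulL_left formL_smulL_right)
  then have "Re (formL v v) = (cmod c)^2 * Re (formL w w)"
    by (simp flip: complex_norm_square)
  ultimately show ?thesis
    unfolding ht_def Let_def v(1)[symmetric] by simp
qed

lemma cline_in_CH13: "Re (formL w w) < 0 \<Longrightarrow> cline w \<in> CH13"
  unfolding CH13_def by blast

lemma cline_in_perp_iff: "cline w \<in> perp s \<longleftrightarrow> cline w \<in> CH13 \<and> formL w s = 0"
proof -
  have "w \<in> cline w"
    unfolding cline_def by (rule CollectI, rule exI[of _ 1]) (cases w, simp add: smulL_def)
  moreover have "formL v s = 0" if "formL w s = 0" "v \<in> cline w" for v
    using that by (auto simp: cline_def formL_smulL_left)
  ultimately show ?thesis unfolding perp_def by blast
qed

lemma root_cmod_formL_rho_sq_ge_3: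
  assumes "complex_leech Lam" "is_root Lam s"
  shows "(cmod (formL rho s))^2 \<ge> 3"
proof -
  obtain a b c where s: "s = (a, b, c)" by (cases s)
  have aL: "a \<in> Lam" and bE: "b \<in> Eis"
    using assms(2) by (auto simp: s is_root_def latL_def)
  have "b \<noteq> 0"
  proof
    assume "b = 0"
    then have "herm12 a a = 3" using assms(2) by (simp add: s is_root_def formL_def)
    moreover have "a \<noteq> 0" using calculation by (auto simp: herm12_def)
    then have "Re (herm12 a a) \<ge> 6" using assms(1) aL by (auto simp: complex_leech_def)
    ultimately show False by simp
  qed
  then show ?thesis using Eis_cmod_sq_ge_1[OF bE] by (simp add: s cmod_formL_rho_sq)
qed

lemma formL_orthogonal_ineq:
  assumes "formL w s = 0"
  shows "(cmod (formL rho s))^2 * Re (formL w w) + Re (formL s s) * (cmod (formL rho w))^2 \<ge> 0"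
proof -
  obtain a b c where s: "s = (a, b, c)" by (cases s)
  obtain x y z where w: "w = (x, y, z)" by (cases w)
  define S W where "S = formL s s" and "W = formL w w"
  have aa: "herm12 a a = S - cnj theta * b * cnj c - theta * c * cnj b"
    by (simp add: S_def s formL_def)
  have xa: "herm12 x a = - (cnj theta * y * cnj c + theta * z * cnj b)"
    using assms unfolding eq_neg_iff_add_eq_0 by (simp add: s w formL_def add_ac mult_ac)
  have ax: "herm12 a x = - (theta * cnj y * c + cnj theta * cnj z * b)"
    by (subst herm12_cnj) (simp add: xa mult.commute mult.left_commute)
  have xx: "herm12 x x = W - cnj theta * y * cnj z - theta * z * cnj y"
    by (simp add: W_def w formL_def)
  have "herm12 (b *s x - y *s a) (b *s x - y *s a) = b * cnj b * W + S * (y * cnj y)"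
    unfolding herm12_diff_diff aa xa ax xx by (simp add: algebra_simps)
  then have "Re (b * cnj b * W + S * (y * cnj y)) \<ge> 0"
    by (metis herm12_self_Re_nonneg)
  then have "(cmod b)^2 * Re W + Re S * (cmod y)^2 \<ge> 0"
    by (simp flip: complex_norm_square)
  then show ?thesis
    by (simp add: S_def W_def s w cmod_formL_rho_sq algebra_simps)
qed

lemma ht_on_perp_ge:
  assumes "Re (formL w w) < 0" "formL w s = 0" "Re (formL s s) > 0"
  shows "ht (cline w) \<ge> (cmod (formL rho s))^2 / Re (formL s s)"
proof -
  have "(cmod (formL rho s))^2 * (- Re (formL w w)) \<le> Re (formL s s) * (cmod (formL rho w))^2"
    using formL_orthogonal_ineq[OF assms(2)] by simp
  then have "(cmod (formL rho s))^2 / Re (formL s s) \<le> (cmod (formL rho w))^2 / (- Re (formL w w))"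
    using assms(1,3) by (simp add: divide_simps mult.commute)
  then show ?thesis using ht_cline[OF assms(1)] by simp
qed

lemma perp_contains_point_of_ht:
  assumes "Re (formL s s) > 0" "formL rho s \<noteq> 0"
  obtains w where "cline w \<in> perp s" "ht (cline w) = (cmod (formL rho s))^2 / Re (formL s s)"
proof -
  define S where "S = Re (formL s s)"
  define t where "t = - of_real S / formL rho s"
  define w where "w = s + smulL t rho"
  have t: "t * formL rho s = - of_real S" using assms(2) by (simp add: t_def)
  have ws: "formL w s = 0"
    using t formL_self_real[of s] by (simp add: w_def S_def formL_add_left formL_smulL_left)
  have "formL w w = of_real S + t * formL rho s + cnj (t * formL rho s)"
    using formL_self_real[of s] formL_cnj[of s rho]
    by (simp add: w_def S_def formL_add_left formL_add_right formL_smulL_left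
        formL_smulL_right formL_rho_rho)
  then have ww: "Re (formL w w) = - S" by (simp add: t)
  have "formL rho w = formL rho s"
    by (simp add: w_def formL_add_right formL_smulL_right formL_rho_rho)
  then have "ht (cline w) = (cmod (formL rho s))^2 / S"
    using ht_cline[of w] ww assms(1) by (simp add: S_def)
  moreover have "cline w \<in> perp s"
    using ww ws assms(1) cline_in_CH13[of w] by (simp add: cline_in_perp_iff S_def)
  ultimately show ?thesis using that S_def by blast
qed

lemma ht_on_root_perp_ge:
  assumes "complex_leech Lam" "is_root Lam s" "p \<in> perp s"
  shows "1 \<le> (cmod (formL rho s))^2 / 3" "(cmod (formL rho s))^2 / 3 \<le> ht p"
proof -
  show "1 \<le> (cmod (formL rho s))^2 / 3"
    using root_cmod_formL_rho_sq_ge_3[OF assms(1,2)] by simp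
  obtain w where w: "p = cline w" "Re (formL w w) < 0"
    using assms(3) by (auto simp: perp_def CH13_def)
  have "formL w s = 0" using assms(3) by (simp add: w(1) cline_in_perp_iff)
  then show "(cmod (formL rho s))^2 / 3 \<le> ht p"
    using ht_on_perp_ge[of w s] assms(2) w by (simp add: is_root_def)
qed

lemma root_perp_meets_ht_1:
  assumes "is_root Lam l" "(cmod (formL rho l))^2 = 3"
  shows "perp l \<inter> {p \<in> CH13. ht p = 1} \<noteq> {}"
proof -
  have "formL rho l \<noteq> 0" using assms(2) by auto
  moreover have "Re (formL l l) = 3" using assms(1) by (simp add: is_root_def)
  ultimately obtain w where "cline w \<in> perp l" "ht (cline w) = 1"
    using perp_contains_point_of_ht[of l] assms(2) by auto
  then show ?thesis by (auto simp: perp_def)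
qed

theorem lemma4p1:
  fixes Lam :: "vec12 set"
  assumes "complex_leech Lam"
  shows "{p \<in> CH13. ht p < 1} \<inter> \<Union>(mirrors Lam) = {} \<and>
         {H \<in> mirrors Lam. H \<inter> {p \<in> CH13. ht p = 1} \<noteq> {}}
           = {perp l | l. is_root Lam l \<and> (cmod (formL rho l))^2 = 3}"
proof
  show "{p \<in> CH13. ht p < 1} \<inter> \<Union>(mirrors Lam) = {}"
    using ht_on_root_perp_ge[OF assms] by (fastforce simp: mirrors_def)
  show "{H \<in> mirrors Lam. H \<inter> {p \<in> CH13. ht p = 1} \<noteq> {}}
      = {perp l | l. is_root Lam l \<and> (cmod (formL rho l))^2 = 3}"
  proof (intro set_eqI iffI)
    fix H assume "H \<in> {H \<in> mirrors Lam. H \<inter> {p \<in> CH13. ht p = 1} \<noteq> {}}"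
    then obtain s p where "H = perp s" "is_root Lam s" "p \<in> perp s" "ht p = 1"
      by (auto simp: mirrors_def)
    moreover from this ht_on_root_perp_ge[OF assms, of s p]
    have "(cmod (formL rho s))^2 = 3" by simp
    ultimately show "H \<in> {perp l | l. is_root Lam l \<and> (cmod (formL rho l))^2 = 3}"
      by blast
  qed (use root_perp_meets_ht_1 in \<open>auto simp: mirrors_def\<close>)
qed

end
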